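(* Let $\eta\colon\mathcal F\to\mathcal G$ be an exact functor between exact categories satisfying ($*'$), (i$'$) and (ii$'$). Then for any $X\in\mathcal F$ and any admissible epimorphism $T\to\eta(X)$ in $\mathcal G$ there exist an admissible epimorphism $Z\to X$ in $\mathcal F$ and an admissible epimorphism $\eta(Z)\to T$ in $\mathcal G$ such that the composition $\eta(Z)\to T\to\eta(X)$ equals $\eta(Z\to X)$. Moreover, if $\eta$ reflects admissible epimorphisms and satisfies ($*'$) and (ii$'$), then $\eta$ satisfies (i$'$).
   Context: Exact categories in Quillen's sense. Conditions for an exact functor $\eta\colon\mathcal F\to\mathcal G$: (i$'$) for any $X\in\mathcal F$ and any admissible epimorphism $T\to\eta(X)$ there exist an admissible epimorphism $Z\to X$ in $\mathcal F$ and a morphism $\eta(Z)\to T$ in $\mathcal G$ such that $\eta(Z)\to T\to\eta(X)$ equals $\eta(Z\to X)$; (ii$'$) for any $X,Y\in\mathcal F$ and any morphism $g\colon\eta(X)\to\eta(Y)$ there exist an admissible epimorphism $p\colon X'\to X$ and a morphism $h\colon X'\to Y$ in $\mathcal F$ with $g\circ\eta(p)=\eta(h)$; ($*'$) for any $T\in\mathcal G$ there exist $U\in\mathcal F$ and an admissible epimorphism $\eta(U)\to T$. *)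

theory Defs
  imports Main
begin

record ('o,'m) addcat =
  Obj :: "'o set"
  Arr :: "'m set"
  Dom :: "'m \<Rightarrow> 'o"
  Cod :: "'m \<Rightarrow> 'o"
  Cmp :: "'m \<Rightarrow> 'm \<Rightarrow> 'm"   (* Cmp C g f = g \<circ> f *)
  Idt :: "'o \<Rightarrow> 'm"
  Add :: "'m \<Rightarrow> 'm \<Rightarrow> 'm"
  Zer :: "'o \<Rightarrow> 'o \<Rightarrow> 'm"
  Neg :: "'m \<Rightarrow> 'm"

definition hom :: "('o,'m,'x) addcat_scheme \<Rightarrow> 'o \<Rightarrow> 'o \<Rightarrow> 'm set" where
  "hom C a b = {f \<in> Arr C. Dom C f = a \<and> Cod C f = b}"

definition category :: "('o,'m,'x) addcat_scheme \<Rightarrow> bool" where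
  "category C \<longleftrightarrow>
     (\<forall>f \<in> Arr C. Dom C f \<in> Obj C \<and> Cod C f \<in> Obj C) \<and>
     (\<forall>a \<in> Obj C. Idt C a \<in> hom C a a) \<and>
     (\<forall>a b c f g. f \<in> hom C a b \<and> g \<in> hom C b c \<longrightarrow> Cmp C g f \<in> hom C a c) \<and>
     (\<forall>a b f. f \<in> hom C a b \<longrightarrow> Cmp C (Idt C b) f = f \<and> Cmp C f (Idt C a) = f) \<and>
     (\<forall>a b c d f g h. f \<in> hom C a b \<and> g \<in> hom C b c \<and> h \<in> hom C c d \<longrightarrow>
        Cmp C h (Cmp C g f) = Cmp C (Cmp C h g) f)"

definition preadditive :: "('o,'m,'x) addcat_scheme \<Rightarrow> bool" where
  "preadditive C \<longleftrightarrow> category C \<and>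
     (\<forall>a \<in> Obj C. \<forall>b \<in> Obj C.
        Zer C a b \<in> hom C a b \<and>
        (\<forall>f \<in> hom C a b. \<forall>g \<in> hom C a b. Add C f g \<in> hom C a b \<and> Add C f g = Add C g f) \<and>
        (\<forall>f \<in> hom C a b. \<forall>g \<in> hom C a b. \<forall>h \<in> hom C a b.
            Add C (Add C f g) h = Add C f (Add C g h)) \<and>
        (\<forall>f \<in> hom C a b. Add C f (Zer C a b) = f) \<and>
        (\<forall>f \<in> hom C a b. Neg C f \<in> hom C a b \<and> Add C f (Neg C f) = Zer C a b)) \<and>
     (\<forall>a b c f g h. f \<in> hom C a b \<and> g \<in> hom C a b \<and> h \<in> hom C b c \<longrightarrow>
        Cmp C h (Add C f g) = Add C (Cmp C h f) (Cmp C h g)) \<and>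
     (\<forall>a b c f g h. f \<in> hom C b c \<and> g \<in> hom C b c \<and> h \<in> hom C a b \<longrightarrow>
        Cmp C (Add C f g) h = Add C (Cmp C f h) (Cmp C g h))"

definition zero_object :: "('o,'m,'x) addcat_scheme \<Rightarrow> 'o \<Rightarrow> bool" where
  "zero_object C z \<longleftrightarrow> z \<in> Obj C \<and>
     (\<forall>a \<in> Obj C. (\<exists>!f. f \<in> hom C z a) \<and> (\<exists>!f. f \<in> hom C a z))"

definition is_biproduct ::
  "('o,'m,'x) addcat_scheme \<Rightarrow> 'o \<Rightarrow> 'o \<Rightarrow> 'o \<Rightarrow> 'm \<Rightarrow> 'm \<Rightarrow> 'm \<Rightarrow> 'm \<Rightarrow> bool" where
  "is_biproduct C a b s i1 i2 p1 p2 \<longleftrightarrow>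
     i1 \<in> hom C a s \<and> i2 \<in> hom C b s \<and> p1 \<in> hom C s a \<and> p2 \<in> hom C s b \<and>
     Cmp C p1 i1 = Idt C a \<and> Cmp C p2 i2 = Idt C b \<and>
     Cmp C p1 i2 = Zer C b a \<and> Cmp C p2 i1 = Zer C a b \<and>
     Add C (Cmp C i1 p1) (Cmp C i2 p2) = Idt C s"

definition additive :: "('o,'m,'x) addcat_scheme \<Rightarrow> bool" where
  "additive C \<longleftrightarrow> preadditive C \<and> (\<exists>z. zero_object C z) \<and>
     (\<forall>a \<in> Obj C. \<forall>b \<in> Obj C. \<exists>s i1 i2 p1 p2. is_biproduct C a b s i1 i2 p1 p2)"

definition iso :: "('o,'m,'x) addcat_scheme \<Rightarrow> 'm \<Rightarrow> bool" where
  "iso C f \<longleftrightarrow> f \<in> Arr C \<and> (\<exists>g \<in> hom C (Cod C f) (Dom C f).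
      Cmp C g f = Idt C (Dom C f) \<and> Cmp C f g = Idt C (Cod C f))"

definition is_kernel :: "('o,'m,'x) addcat_scheme \<Rightarrow> 'm \<Rightarrow> 'm \<Rightarrow> bool" where
  "is_kernel C i p \<longleftrightarrow> (\<exists>a b c. i \<in> hom C a b \<and> p \<in> hom C b c \<and> Cmp C p i = Zer C a c \<and>
     (\<forall>d f. f \<in> hom C d b \<and> Cmp C p f = Zer C d c \<longrightarrow> (\<exists>!g. g \<in> hom C d a \<and> Cmp C i g = f)))"

definition is_cokernel :: "('o,'m,'x) addcat_scheme \<Rightarrow> 'm \<Rightarrow> 'm \<Rightarrow> bool" where
  "is_cokernel C p i \<longleftrightarrow> (\<exists>a b c. i \<in> hom C a b \<and> p \<in> hom C b c \<and> Cmp C p i = Zer C a c \<and>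
     (\<forall>d f. f \<in> hom C b d \<and> Cmp C f i = Zer C a d \<longrightarrow> (\<exists>!g. g \<in> hom C c d \<and> Cmp C g p = f)))"

text \<open>Square  f' \<circ> i = i' \<circ> f  with i: a\<rightarrow>b, f: a\<rightarrow>a', f': b\<rightarrow>b', i': a'\<rightarrow>b' is a pushout.\<close>
definition is_pushout :: "('o,'m,'x) addcat_scheme \<Rightarrow> 'm \<Rightarrow> 'm \<Rightarrow> 'm \<Rightarrow> 'm \<Rightarrow> bool" where
  "is_pushout C i f f' i' \<longleftrightarrow>
     i \<in> Arr C \<and> f \<in> Arr C \<and> f' \<in> Arr C \<and> i' \<in> Arr C \<and>
     Dom C i = Dom C f \<and> Dom C f' = Cod C i \<and> Dom C i' = Cod C f \<and> Cod C f' = Cod C i' \<and>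
     Cmp C f' i = Cmp C i' f \<and>
     (\<forall>x u v. u \<in> hom C (Cod C i) x \<and> v \<in> hom C (Cod C f) x \<and> Cmp C u i = Cmp C v f \<longrightarrow>
        (\<exists>!w. w \<in> hom C (Cod C f') x \<and> Cmp C w f' = u \<and> Cmp C w i' = v))"

text \<open>Square  p \<circ> f' = f \<circ> p'  with p: b\<rightarrow>c, f: c'\<rightarrow>c, p': b'\<rightarrow>c', f': b'\<rightarrow>b is a pullback.\<close>
definition is_pullback :: "('o,'m,'x) addcat_scheme \<Rightarrow> 'm \<Rightarrow> 'm \<Rightarrow> 'm \<Rightarrow> 'm \<Rightarrow> bool" where
  "is_pullback C p f f' p' \<longleftrightarrow>
     p \<in> Arr C \<and> f \<in> Arr C \<and> f' \<in> Arr C \<and> p' \<in> Arr C \<and>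
     Cod C p = Cod C f \<and> Cod C f' = Dom C p \<and> Cod C p' = Dom C f \<and> Dom C f' = Dom C p' \<and>
     Cmp C p f' = Cmp C f p' \<and>
     (\<forall>x u v. u \<in> hom C x (Dom C p) \<and> v \<in> hom C x (Dom C f) \<and> Cmp C p u = Cmp C f v \<longrightarrow>
        (\<exists>!w. w \<in> hom C x (Dom C f') \<and> Cmp C f' w = u \<and> Cmp C p' w = v))"

section \<open>Exact categories (Quillen; axioms as in Buehler, Def. 2.1)\<close>

definition adm_mono :: "('o,'m,'x) addcat_scheme \<Rightarrow> ('m \<times> 'm) set \<Rightarrow> 'm \<Rightarrow> bool" where
  "adm_mono C E i \<longleftrightarrow> (\<exists>p. (i, p) \<in> E)"

definition adm_epi :: "('o,'m,'x) addcat_scheme \<Rightarrow> ('m \<times> 'm) set \<Rightarrow> 'm \<Rightarrow> bool" where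
  "adm_epi C E p \<longleftrightarrow> (\<exists>i. (i, p) \<in> E)"

text \<open>E is the class of admissible short exact sequences (pairs (i,p), i then p).\<close>
definition exact_category :: "('o,'m,'x) addcat_scheme \<Rightarrow> ('m \<times> 'm) set \<Rightarrow> bool" where
  "exact_category C E \<longleftrightarrow> additive C \<and>
     (\<forall>(i,p) \<in> E. is_kernel C i p \<and> is_cokernel C p i) \<and>
     (\<forall>i p i' p' \<alpha> \<beta> \<gamma>. (i,p) \<in> E \<and> is_kernel C i' p' \<and> is_cokernel C p' i' \<and>
        iso C \<alpha> \<and> iso C \<beta> \<and> iso C \<gamma> \<and>
        \<alpha> \<in> hom C (Dom C i) (Dom C i') \<and> \<beta> \<in> hom C (Cod C i) (Cod C i') \<and>
        \<gamma> \<in> hom C (Cod C p) (Cod C p') \<and>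
        Cmp C \<beta> i = Cmp C i' \<alpha> \<and> Cmp C \<gamma> p = Cmp C p' \<beta> \<longrightarrow> (i',p') \<in> E) \<and>
     (\<forall>a \<in> Obj C. adm_mono C E (Idt C a)) \<and>
     (\<forall>a \<in> Obj C. adm_epi C E (Idt C a)) \<and>
     (\<forall>a b c i j. i \<in> hom C a b \<and> j \<in> hom C b c \<and> adm_mono C E i \<and> adm_mono C E j
        \<longrightarrow> adm_mono C E (Cmp C j i)) \<and>
     (\<forall>a b c p q. p \<in> hom C a b \<and> q \<in> hom C b c \<and> adm_epi C E p \<and> adm_epi C E q
        \<longrightarrow> adm_epi C E (Cmp C q p)) \<and>
     (\<forall>i f. adm_mono C E i \<and> f \<in> Arr C \<and> Dom C f = Dom C i \<longrightarrow>
        (\<exists>f' i'. is_pushout C i f f' i' \<and> adm_mono C E i')) \<and>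
     (\<forall>p f. adm_epi C E p \<and> f \<in> Arr C \<and> Cod C f = Cod C p \<longrightarrow>
        (\<exists>f' p'. is_pullback C p f f' p' \<and> adm_epi C E p'))"

definition is_functor ::
  "('o,'m,'x) addcat_scheme \<Rightarrow> ('p,'n,'y) addcat_scheme \<Rightarrow> ('o \<Rightarrow> 'p) \<Rightarrow> ('m \<Rightarrow> 'n) \<Rightarrow> bool" where
  "is_functor F G fo fm \<longleftrightarrow>
     (\<forall>a \<in> Obj F. fo a \<in> Obj G \<and> fm (Idt F a) = Idt G (fo a)) \<and>
     (\<forall>a b f. f \<in> hom F a b \<longrightarrow> fm f \<in> hom G (fo a) (fo b)) \<and>
     (\<forall>a b c f g. f \<in> hom F a b \<and> g \<in> hom F b c \<longrightarrow> fm (Cmp F g f) = Cmp G (fm g) (fm f))"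

definition additive_functor ::
  "('o,'m,'x) addcat_scheme \<Rightarrow> ('p,'n,'y) addcat_scheme \<Rightarrow> ('o \<Rightarrow> 'p) \<Rightarrow> ('m \<Rightarrow> 'n) \<Rightarrow> bool" where
  "additive_functor F G fo fm \<longleftrightarrow> is_functor F G fo fm \<and>
     (\<forall>a b f g. f \<in> hom F a b \<and> g \<in> hom F a b \<longrightarrow> fm (Add F f g) = Add G (fm f) (fm g))"

definition exact_functor ::
  "('o,'m,'x) addcat_scheme \<Rightarrow> ('m \<times> 'm) set \<Rightarrow> ('p,'n,'y) addcat_scheme \<Rightarrow> ('n \<times> 'n) set
     \<Rightarrow> ('o \<Rightarrow> 'p) \<Rightarrow> ('m \<Rightarrow> 'n) \<Rightarrow> bool" where
  "exact_functor F EF G EG fo fm \<longleftrightarrow>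
     exact_category F EF \<and> exact_category G EG \<and> additive_functor F G fo fm \<and>
     (\<forall>(i,p) \<in> EF. (fm i, fm p) \<in> EG)"

definition cond_i' where
  "cond_i' F EF G EG fo fm \<longleftrightarrow>
     (\<forall>X \<in> Obj F. \<forall>T t. t \<in> hom G T (fo X) \<and> adm_epi G EG t \<longrightarrow>
        (\<exists>Z z s. z \<in> hom F Z X \<and> adm_epi F EF z \<and> s \<in> hom G (fo Z) T \<and>
                 Cmp G t s = fm z))"

definition cond_ii' where
  "cond_ii' F EF G EG fo fm \<longleftrightarrow>
     (\<forall>X \<in> Obj F. \<forall>Y \<in> Obj F. \<forall>g \<in> hom G (fo X) (fo Y).
        (\<exists>X' p h. p \<in> hom F X' X \<and> adm_epi F EF p \<and> h \<in> hom F X' Y \<and>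
                  Cmp G g (fm p) = fm h))"

definition cond_star' where
  "cond_star' F EF G EG fo fm \<longleftrightarrow>
     (\<forall>T \<in> Obj G. \<exists>U \<in> Obj F. \<exists>e. e \<in> hom G (fo U) T \<and> adm_epi G EG e)"

definition reflects_adm_epi where
  "reflects_adm_epi F EF G EG fo fm \<longleftrightarrow>
     (\<forall>f \<in> Arr F. adm_epi G EG (fm f) \<longrightarrow> adm_epi F EF f)"

end

theory Submission
  imports Defs
begin

text \<open>Applying \<open>(ii')\<close> to \<open>t \<circ> e\<close>, where \<open>e : \<eta>(U) \<rightarrow> T\<close> is an admissible epimorphism
  given by \<open>(*')\<close>, yields \<open>h : U' \<rightarrow> X\<close> and an admissible epimorphism \<open>\<sigma> : \<eta>(U') \<rightarrow> T\<close> with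
  \<open>t \<circ> \<sigma> = \<eta>(h)\<close>. If \<open>\<eta>\<close> reflects admissible epimorphisms, then \<open>h\<close> is admissible because
  \<open>\<eta>(h) = t \<circ> \<sigma>\<close> is, which is \<open>(i')\<close>. Otherwise, let \<open>(z\<^sub>0, s\<^sub>0)\<close> be a lift given by
  \<open>(i')\<close> and pass to \<open>Z\<^sub>0 \<oplus> U'\<close>: the map \<open>[z\<^sub>0, h]\<close> is an admissible epimorphism because
  \<open>z\<^sub>0\<close> is, \<open>[s\<^sub>0, \<sigma>]\<close> is one because \<open>\<sigma>\<close> is, and \<open>\<eta>\<close> preserves the biproduct.
  That \<open>[f, g]\<close> is admissible as soon as \<open>f\<close> is follows by writing it as a biproduct
  projection composed with a pullback of \<open>f\<close>.\<close>

locale preadditive_cat =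
  fixes C :: "('o,'m,'x) addcat_scheme"
  assumes preadditive: "preadditive C"
begin

lemma category_laws:
  "\<forall>f \<in> Arr C. Dom C f \<in> Obj C \<and> Cod C f \<in> Obj C"
  "\<forall>a \<in> Obj C. Idt C a \<in> hom C a a"
  "\<forall>a b c f g. f \<in> hom C a b \<and> g \<in> hom C b c \<longrightarrow> Cmp C g f \<in> hom C a c"
  "\<forall>a b f. f \<in> hom C a b \<longrightarrow> Cmp C (Idt C b) f = f \<and> Cmp C f (Idt C a) = f"
  "\<forall>a b c d f g h. f \<in> hom C a b \<and> g \<in> hom C b c \<and> h \<in> hom C c d \<longrightarrow>
     Cmp C h (Cmp C g f) = Cmp C (Cmp C h g) f"
  using preadditive unfolding preadditive_def category_def by simp_all

lemma hom_group:
  assumes "a \<in> Obj C" "b \<in> Obj C"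
  shows "Zer C a b \<in> hom C a b \<and>
    (\<forall>f \<in> hom C a b. \<forall>g \<in> hom C a b. Add C f g \<in> hom C a b \<and> Add C f g = Add C g f) \<and>
    (\<forall>f \<in> hom C a b. \<forall>g \<in> hom C a b. \<forall>h \<in> hom C a b.
        Add C (Add C f g) h = Add C f (Add C g h)) \<and>
    (\<forall>f \<in> hom C a b. Add C f (Zer C a b) = f) \<and>
    (\<forall>f \<in> hom C a b. Neg C f \<in> hom C a b \<and> Add C f (Neg C f) = Zer C a b)"
  using preadditive[unfolded preadditive_def, THEN conjunct2, THEN conjunct1] assms by blast

lemma comp_distrib:
  "\<forall>a b c f g h. f \<in> hom C a b \<and> g \<in> hom C a b \<and> h \<in> hom C b c \<longrightarrow>
     Cmp C h (Add C f g) = Add C (Cmp C h f) (Cmp C h g)"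
  "\<forall>a b c f g h. f \<in> hom C b c \<and> g \<in> hom C b c \<and> h \<in> hom C a b \<longrightarrow>
     Cmp C (Add C f g) h = Add C (Cmp C f h) (Cmp C g h)"
  using preadditive unfolding preadditive_def by simp_all

lemma hom_iff: "f \<in> hom C a b \<longleftrightarrow> f \<in> Arr C \<and> Dom C f = a \<and> Cod C f = b"
  by (simp add: hom_def)

lemma hom_objs: "f \<in> hom C a b \<Longrightarrow> a \<in> Obj C \<and> b \<in> Obj C"
  using category_laws(1) unfolding hom_def by blast

lemma id_in_hom [intro]: "a \<in> Obj C \<Longrightarrow> Idt C a \<in> hom C a a"
  using category_laws(2) by blast

lemma comp_in_hom [intro]: "f \<in> hom C a b \<Longrightarrow> g \<in> hom C b c \<Longrightarrow> Cmp C g f \<in> hom C a c"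
  using category_laws(3) by blast

lemma comp_id_left: "f \<in> hom C a b \<Longrightarrow> Cmp C (Idt C b) f = f"
  using category_laws(4) by blast

lemma comp_id_right: "f \<in> hom C a b \<Longrightarrow> Cmp C f (Idt C a) = f"
  using category_laws(4) by blast

lemma comp_assoc:
  "f \<in> hom C a b \<Longrightarrow> g \<in> hom C b c \<Longrightarrow> h \<in> hom C c d \<Longrightarrow>
   Cmp C h (Cmp C g f) = Cmp C (Cmp C h g) f"
  using category_laws(5) by blast

lemma comp_distrib_left:
  "f \<in> hom C a b \<Longrightarrow> g \<in> hom C a b \<Longrightarrow> h \<in> hom C b c \<Longrightarrow>
   Cmp C h (Add C f g) = Add C (Cmp C h f) (Cmp C h g)"
  using comp_distrib(1) by blast

lemma comp_distrib_right:
  "f \<in> hom C b c \<Longrightarrow> g \<in> hom C b c \<Longrightarrow> h \<in> hom C a b \<Longrightarrow>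
   Cmp C (Add C f g) h = Add C (Cmp C f h) (Cmp C g h)"
  using comp_distrib(2) by blast

lemma zero_in_hom [intro]: "a \<in> Obj C \<Longrightarrow> b \<in> Obj C \<Longrightarrow> Zer C a b \<in> hom C a b"
  using hom_group by blast

lemma add_in_hom [intro]:
  assumes "f \<in> hom C a b" "g \<in> hom C a b"
  shows "Add C f g \<in> hom C a b"
  using hom_group[of a b] hom_objs[OF assms(1)] assms by blast

lemma add_commute:
  assumes "f \<in> hom C a b" "g \<in> hom C a b"
  shows "Add C f g = Add C g f"
  using hom_group[of a b] hom_objs[OF assms(1)] assms by blast

lemma add_assoc:
  assumes "f \<in> hom C a b" "g \<in> hom C a b" "h \<in> hom C a b"
  shows "Add C (Add C f g) h = Add C f (Add C g h)"
  using hom_group[of a b] hom_objs[OF assms(1)] assms by blast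

lemma add_zero_right:
  assumes "f \<in> hom C a b"
  shows "Add C f (Zer C a b) = f"
  using hom_group[of a b] hom_objs[OF assms(1)] assms by blast

lemma neg_in_hom [intro]:
  assumes "f \<in> hom C a b"
  shows "Neg C f \<in> hom C a b"
  using hom_group[of a b] hom_objs[OF assms(1)] assms by blast

lemma add_neg_right:
  assumes "f \<in> hom C a b"
  shows "Add C f (Neg C f) = Zer C a b"
  using hom_group[of a b] hom_objs[OF assms(1)] assms by blast

lemma add_neg_left: "f \<in> hom C a b \<Longrightarrow> Add C (Neg C f) f = Zer C a b"
  using add_commute add_neg_right neg_in_hom by metis

lemma add_self_eq_zero: "y \<in> hom C a b \<Longrightarrow> Add C y y = y \<Longrightarrow> y = Zer C a b"
  by (metis add_assoc add_neg_right add_zero_right neg_in_hom)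

lemma comp_zero_left:
  assumes f: "f \<in> hom C a b" and c: "c \<in> Obj C"
  shows "Cmp C (Zer C b c) f = Zer C a c"
proof (rule add_self_eq_zero)
  have z: "Zer C b c \<in> hom C b c" using hom_objs[OF f] c by blast
  then show "Cmp C (Zer C b c) f \<in> hom C a c" using f by blast
  show "Add C (Cmp C (Zer C b c) f) (Cmp C (Zer C b c) f) = Cmp C (Zer C b c) f"
    using comp_distrib_right[OF z z f] add_zero_right[OF z] by simp
qed

lemma iso_id: "a \<in> Obj C \<Longrightarrow> iso C (Idt C a)"
  unfolding iso_def using id_in_hom comp_id_left hom_iff by fastforce

lemma biproduct_homs:
  "is_biproduct C a b s i1 i2 p1 p2 \<Longrightarrow>
   i1 \<in> hom C a s \<and> i2 \<in> hom C b s \<and> p1 \<in> hom C s a \<and> p2 \<in> hom C s b"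
  unfolding is_biproduct_def by blast

lemma biproduct_swap:
  assumes B: "is_biproduct C a b s i1 i2 p1 p2"
  shows "is_biproduct C b a s i2 i1 p2 p1"
proof -
  have h: "i1 \<in> hom C a s" "i2 \<in> hom C b s" "p1 \<in> hom C s a" "p2 \<in> hom C s b"
    using biproduct_homs[OF B] by auto
  have "Add C (Cmp C i2 p2) (Cmp C i1 p1) = Add C (Cmp C i1 p1) (Cmp C i2 p2)"
    using add_commute h by blast
  then show ?thesis using B unfolding is_biproduct_def by simp
qed

lemma biproduct_expand:
  assumes B: "is_biproduct C a b s i1 i2 p1 p2" and w: "w \<in> hom C x s"
  shows "w = Add C (Cmp C i1 (Cmp C p1 w)) (Cmp C i2 (Cmp C p2 w))"
proof -
  have h: "i1 \<in> hom C a s" "i2 \<in> hom C b s" "p1 \<in> hom C s a" "p2 \<in> hom C s b"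
    using biproduct_homs[OF B] by auto
  have "w = Cmp C (Idt C s) w" using comp_id_left w by simp
  also have "\<dots> = Cmp C (Add C (Cmp C i1 p1) (Cmp C i2 p2)) w"
    using B unfolding is_biproduct_def by simp
  also have "\<dots> = Add C (Cmp C (Cmp C i1 p1) w) (Cmp C (Cmp C i2 p2) w)"
    using comp_distrib_right h w by blast
  also have "\<dots> = Add C (Cmp C i1 (Cmp C p1 w)) (Cmp C i2 (Cmp C p2 w))"
    using comp_assoc[OF w h(3) h(1)] comp_assoc[OF w h(4) h(2)] by simp
  finally show ?thesis .
qed

lemma biproduct_fst_pair:
  assumes B: "is_biproduct C a b s i1 i2 p1 p2"
    and u: "u \<in> hom C x a" and v: "v \<in> hom C x b"
  shows "Cmp C p1 (Add C (Cmp C i1 u) (Cmp C i2 v)) = u"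
proof -
  have h: "i1 \<in> hom C a s" "i2 \<in> hom C b s" "p1 \<in> hom C s a"
    using biproduct_homs[OF B] by auto
  have "Cmp C p1 (Add C (Cmp C i1 u) (Cmp C i2 v))
      = Add C (Cmp C (Cmp C p1 i1) u) (Cmp C (Cmp C p1 i2) v)"
    using comp_distrib_left[OF comp_in_hom[OF u h(1)] comp_in_hom[OF v h(2)] h(3)]
      comp_assoc[OF u h(1) h(3)] comp_assoc[OF v h(2) h(3)] by simp
  also have "\<dots> = Add C (Cmp C (Idt C a) u) (Cmp C (Zer C b a) v)"
    using B unfolding is_biproduct_def by simp
  also have "\<dots> = u"
    using comp_id_left[OF u] comp_zero_left[OF v] add_zero_right[OF u] hom_objs[OF u] by simp
  finally show ?thesis .
qed

lemma biproduct_snd_pair: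
  assumes B: "is_biproduct C a b s i1 i2 p1 p2"
    and u: "u \<in> hom C x a" and v: "v \<in> hom C x b"
  shows "Cmp C p2 (Add C (Cmp C i1 u) (Cmp C i2 v)) = v"
proof -
  have "i1 \<in> hom C a s" "i2 \<in> hom C b s"
    using biproduct_homs[OF B] by auto
  then have "Add C (Cmp C i1 u) (Cmp C i2 v) = Add C (Cmp C i2 v) (Cmp C i1 u)"
    using add_commute u v by blast
  then show ?thesis using biproduct_fst_pair[OF biproduct_swap[OF B] v u] by simp
qed

lemma pullback_comparison:
  assumes P: "is_pullback C p f f' p'" and P': "is_pullback C p f f'' p''"
  obtains \<theta> \<theta>' where "\<theta> \<in> hom C (Dom C f') (Dom C f'')" "\<theta>' \<in> hom C (Dom C f'') (Dom C f')"
    "Cmp C \<theta>' \<theta> = Idt C (Dom C f')" "Cmp C \<theta> \<theta>' = Idt C (Dom C f'')" "Cmp C p'' \<theta> = p'"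
proof -
  define D where "D = Dom C f'"
  define D' where "D' = Dom C f''"
  have h: "f' \<in> hom C D (Dom C p)" "p' \<in> hom C D (Dom C f)"
    using P unfolding is_pullback_def D_def hom_def by auto
  have h': "f'' \<in> hom C D' (Dom C p)" "p'' \<in> hom C D' (Dom C f)"
    using P' unfolding is_pullback_def D'_def hom_def by auto
  have sq: "Cmp C p f' = Cmp C f p'" and sq': "Cmp C p f'' = Cmp C f p''"
    using P P' unfolding is_pullback_def by auto
  have U: "\<And>x u v. u \<in> hom C x (Dom C p) \<Longrightarrow> v \<in> hom C x (Dom C f) \<Longrightarrow>
      Cmp C p u = Cmp C f v \<Longrightarrow> \<exists>!w. w \<in> hom C x D \<and> Cmp C f' w = u \<and> Cmp C p' w = v"
    using P unfolding is_pullback_def D_def by blast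
  have U': "\<And>x u v. u \<in> hom C x (Dom C p) \<Longrightarrow> v \<in> hom C x (Dom C f) \<Longrightarrow>
      Cmp C p u = Cmp C f v \<Longrightarrow> \<exists>!w. w \<in> hom C x D' \<and> Cmp C f'' w = u \<and> Cmp C p'' w = v"
    using P' unfolding is_pullback_def D'_def by blast
  obtain \<theta> where th: "\<theta> \<in> hom C D D'" "Cmp C f'' \<theta> = f'" "Cmp C p'' \<theta> = p'"
    using U'[OF h sq] by blast
  obtain \<theta>' where th': "\<theta>' \<in> hom C D' D" "Cmp C f' \<theta>' = f''" "Cmp C p' \<theta>' = p''"
    using U[OF h' sq'] by blast
  have "Cmp C \<theta>' \<theta> = Idt C D"
  proof -
    have "Cmp C \<theta>' \<theta> \<in> hom C D D \<and> Cmp C f' (Cmp C \<theta>' \<theta>) = f' \<and> Cmp C p' (Cmp C \<theta>' \<theta>) = p'"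
      using th th' comp_assoc[OF th(1) th'(1) h(1)] comp_assoc[OF th(1) th'(1) h(2)] by auto
    moreover have "Idt C D \<in> hom C D D \<and> Cmp C f' (Idt C D) = f' \<and> Cmp C p' (Idt C D) = p'"
      using comp_id_right h hom_objs by auto
    ultimately show ?thesis using U[OF h sq] by blast
  qed
  moreover have "Cmp C \<theta> \<theta>' = Idt C D'"
  proof -
    have "Cmp C \<theta> \<theta>' \<in> hom C D' D' \<and> Cmp C f'' (Cmp C \<theta> \<theta>') = f'' \<and> Cmp C p'' (Cmp C \<theta> \<theta>') = p''"
      using th th' comp_assoc[OF th'(1) th(1) h'(1)] comp_assoc[OF th'(1) th(1) h'(2)] by auto
    moreover have "Idt C D' \<in> hom C D' D' \<and> Cmp C f'' (Idt C D') = f'' \<and> Cmp C p'' (Idt C D') = p''"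
      using comp_id_right h' hom_objs by auto
    ultimately show ?thesis using U'[OF h' sq'] by blast
  qed
  ultimately show ?thesis using that th(1,3) th'(1) unfolding D_def D'_def by blast
qed

lemma iso_is_cokernel:
  assumes th: "\<theta> \<in> hom C d c" and th': "\<theta>' \<in> hom C c d"
    and inv: "Cmp C \<theta>' \<theta> = Idt C d" "Cmp C \<theta> \<theta>' = Idt C c"
    and j: "j \<in> hom C a d" and zero: "Cmp C \<theta> j = Zer C a c"
  shows "is_cokernel C \<theta> j"
  unfolding is_cokernel_def
proof (intro exI conjI allI impI)
  fix x f assume "f \<in> hom C d x \<and> Cmp C f j = Zer C a x"
  then have f: "f \<in> hom C d x" by blast
  show "\<exists>!g. g \<in> hom C c x \<and> Cmp C g \<theta> = f"
  proof (rule ex1I[of _ "Cmp C f \<theta>'"])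
    show "Cmp C f \<theta>' \<in> hom C c x \<and> Cmp C (Cmp C f \<theta>') \<theta> = f"
      using comp_assoc[OF th th' f] inv comp_id_right f th' by auto
  next
    fix g assume g: "g \<in> hom C c x \<and> Cmp C g \<theta> = f"
    then have "g = Cmp C g (Cmp C \<theta> \<theta>')" using inv comp_id_right[of g c x] by simp
    also have "\<dots> = Cmp C f \<theta>'" using comp_assoc[OF th' th] g by metis
    finally show "g = Cmp C f \<theta>'" .
  qed
qed (use th j zero in auto)

lemma kernel_of_id_along_iso:
  assumes K: "is_kernel C i (Idt C c)"
    and th: "\<theta> \<in> hom C d c" and th': "\<theta>' \<in> hom C c d"
    and inv: "Cmp C \<theta>' \<theta> = Idt C d" "Cmp C \<theta> \<theta>' = Idt C c"
  shows "is_kernel C (Cmp C \<theta>' i) \<theta>"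
proof -
  have c: "c \<in> Obj C" using hom_objs th by blast
  obtain a b c' where i0: "i \<in> hom C a b" and id0: "Idt C c \<in> hom C b c'"
    and z0: "Cmp C (Idt C c) i = Zer C a c'"
    and U0: "\<forall>d f. f \<in> hom C d b \<and> Cmp C (Idt C c) f = Zer C d c' \<longrightarrow>
        (\<exists>!g. g \<in> hom C d a \<and> Cmp C i g = f)"
    using K unfolding is_kernel_def by blast
  have "b = c" "c' = c" using id0 id_in_hom[OF c] hom_iff by auto
  note i = i0[unfolded this] and U = U0[unfolded this] and z = z0[unfolded this]
  have i_zero: "i = Zer C a c" using z comp_id_left i by simp
  show ?thesis
    unfolding is_kernel_def
  proof (intro exI conjI allI impI)
    show "Cmp C \<theta>' i \<in> hom C a d" "\<theta> \<in> hom C d c" using i th th' by blast+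
    show "Cmp C \<theta> (Cmp C \<theta>' i) = Zer C a c"
      using comp_assoc[OF i th' th] inv comp_id_left i i_zero by simp
    fix x f assume "f \<in> hom C x d \<and> Cmp C \<theta> f = Zer C x c"
    then have f: "f \<in> hom C x d" and fz: "Cmp C \<theta> f = Zer C x c" by auto
    have tf: "Cmp C \<theta> f \<in> hom C x c" using f th by blast
    then obtain g where g: "g \<in> hom C x a" "Cmp C i g = Cmp C \<theta> f"
      and g_unique: "\<And>g'. g' \<in> hom C x a \<and> Cmp C i g' = Cmp C \<theta> f \<Longrightarrow> g' = g"
      using U comp_id_left fz by metis
    show "\<exists>!g. g \<in> hom C x a \<and> Cmp C (Cmp C \<theta>' i) g = f"
    proof (rule ex1I[of _ g])
      have "Cmp C (Cmp C \<theta>' i) g = Cmp C (Cmp C \<theta>' \<theta>) f"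
        using comp_assoc[OF g(1) i th'] g(2) comp_assoc[OF f th th'] by simp
      then show "g \<in> hom C x a \<and> Cmp C (Cmp C \<theta>' i) g = f" using g inv comp_id_left f by simp
    next
      fix g' assume g': "g' \<in> hom C x a \<and> Cmp C (Cmp C \<theta>' i) g' = f"
      have ig': "Cmp C i g' \<in> hom C x c" using g' i by blast
      have "Cmp C i g' = Cmp C (Cmp C \<theta> \<theta>') (Cmp C i g')" using inv comp_id_left ig' by simp
      also have "\<dots> = Cmp C \<theta> f" using comp_assoc[OF ig' th' th] g' comp_assoc[OF _ i th'] by metis
      finally show "g' = g" using g_unique g' by blast
    qed
  qed
qed

lemma biproduct_pullback_over_zero:
  assumes B: "is_biproduct C c b S j1 j2 q1 q2" and pi: "\<pi> \<in> hom C b Q"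
    and into_Q: "\<And>x w. w \<in> hom C x Q \<Longrightarrow> w = Zer C x Q"
  shows "is_pullback C \<pi> (Zer C c Q) q2 q1"
  unfolding is_pullback_def
proof (intro conjI allI impI)
  have h: "j1 \<in> hom C c S" "j2 \<in> hom C b S" "q1 \<in> hom C S c" "q2 \<in> hom C S b"
    using biproduct_homs[OF B] by auto
  have z: "Zer C c Q \<in> hom C c Q" using hom_objs h(1) pi by blast
  show "\<pi> \<in> Arr C" "Zer C c Q \<in> Arr C" "q2 \<in> Arr C" "q1 \<in> Arr C"
    "Cod C \<pi> = Cod C (Zer C c Q)" "Cod C q2 = Dom C \<pi>" "Cod C q1 = Dom C (Zer C c Q)"
    "Dom C q2 = Dom C q1"
    using pi h z hom_iff by auto
  show "Cmp C \<pi> q2 = Cmp C (Zer C c Q) q1"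
    using into_Q[OF comp_in_hom[OF h(4) pi]] into_Q[OF comp_in_hom[OF h(3) z]] by simp
  fix x u v
  assume "u \<in> hom C x (Dom C \<pi>) \<and> v \<in> hom C x (Dom C (Zer C c Q)) \<and>
    Cmp C \<pi> u = Cmp C (Zer C c Q) v"
  then have u: "u \<in> hom C x b" and v: "v \<in> hom C x c" using pi z hom_iff by auto
  let ?w = "Add C (Cmp C j1 v) (Cmp C j2 u)"
  show "\<exists>!w. w \<in> hom C x (Dom C q2) \<and> Cmp C q2 w = u \<and> Cmp C q1 w = v"
  proof (rule ex1I[of _ ?w])
    have "?w \<in> hom C x S" using v u h by blast
    then show "?w \<in> hom C x (Dom C q2) \<and> Cmp C q2 ?w = u \<and> Cmp C q1 ?w = v"
      using h(4) hom_iff biproduct_fst_pair[OF B v u] biproduct_snd_pair[OF B v u] by simp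
  next
    fix w assume w: "w \<in> hom C x (Dom C q2) \<and> Cmp C q2 w = u \<and> Cmp C q1 w = v"
    then have "w \<in> hom C x S" using h hom_iff by auto
    then show "w = ?w" using w biproduct_expand[OF B] by metis
  qed
qed

context
  fixes a b c s S i1 i2 p1 p2 j1 j2 q1 q2 f g
  assumes B: "is_biproduct C a b s i1 i2 p1 p2" and B': "is_biproduct C c b S j1 j2 q1 q2"
    and f: "f \<in> hom C a c" and g: "g \<in> hom C b c"
  fixes r M \<psi>
  defines "r \<equiv> Add C (Cmp C f p1) (Cmp C g p2)"
    and "M \<equiv> Add C (Cmp C j1 r) (Cmp C j2 p2)"
    and "\<psi> \<equiv> Add C q1 (Cmp C (Neg C g) q2)"
begin

text \<open>In matrix notation \<open>r = [f g]\<close>, \<open>M = (r, p2)\<close> and \<open>\<psi> = [1 -g]\<close>; the square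
  \<open>\<psi> \<circ> M = f \<circ> p1\<close> is a pullback, which exhibits \<open>r = q1 \<circ> M\<close> as a composite of
  a pullback of \<open>f\<close> and a projection.\<close>

lemma biproduct_case_homs:
  "r \<in> hom C s c" "M \<in> hom C s S" "\<psi> \<in> hom C S c"
  "i1 \<in> hom C a s" "i2 \<in> hom C b s" "p1 \<in> hom C s a" "p2 \<in> hom C s b"
  "j1 \<in> hom C c S" "j2 \<in> hom C b S" "q1 \<in> hom C S c" "q2 \<in> hom C S b"
  using biproduct_homs[OF B] biproduct_homs[OF B'] f g
  unfolding r_def M_def \<psi>_def by blast+

lemma biproduct_case_factor: "Cmp C q1 M = r" "Cmp C q2 M = p2"
  unfolding M_def
  using biproduct_fst_pair[OF B' biproduct_case_homs(1,7)]
    biproduct_snd_pair[OF B' biproduct_case_homs(1,7)] by simp_all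

lemma biproduct_case_square: "Cmp C \<psi> M = Cmp C f p1"
proof -
  note h = biproduct_case_homs
  have ng: "Neg C g \<in> hom C b c" using g by blast
  have c: "c \<in> Obj C" using hom_objs g by blast
  have "Cmp C \<psi> M = Add C r (Cmp C (Neg C g) p2)"
    unfolding \<psi>_def using comp_distrib_right[OF h(10) comp_in_hom[OF h(11) ng] h(2)]
      biproduct_case_factor comp_assoc[OF h(2) h(11) ng] by simp
  also have "\<dots> = Add C (Cmp C f p1) (Cmp C (Add C g (Neg C g)) p2)"
    unfolding r_def
    using add_assoc[OF comp_in_hom[OF h(6) f] comp_in_hom[OF h(7) g] comp_in_hom[OF h(7) ng]]
      comp_distrib_right[OF g ng h(7)] by simp
  also have "\<dots> = Cmp C f p1"
    using add_neg_right[OF g] comp_zero_left[OF h(7) c] add_zero_right[OF comp_in_hom[OF h(6) f]]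
    by simp
  finally show ?thesis .
qed

lemma biproduct_case_lift:
  assumes u: "u \<in> hom C x a" and v: "v \<in> hom C x S" and uv: "Cmp C f u = Cmp C \<psi> v"
  defines "w \<equiv> Add C (Cmp C i1 u) (Cmp C i2 (Cmp C q2 v))"
  shows "w \<in> hom C x s" "Cmp C p1 w = u" "Cmp C M w = v"
proof -
  note h = biproduct_case_homs
  have c: "c \<in> Obj C" using hom_objs g by blast
  have ng: "Neg C g \<in> hom C b c" using g by blast
  have qv: "Cmp C q1 v \<in> hom C x c" "Cmp C q2 v \<in> hom C x b" using v h by auto
  show w: "w \<in> hom C x s" unfolding w_def using u qv h by blast
  show p1w: "Cmp C p1 w = u" unfolding w_def using biproduct_fst_pair[OF B u qv(2)] .
  have p2w: "Cmp C p2 w = Cmp C q2 v" unfolding w_def using biproduct_snd_pair[OF B u qv(2)] .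
  have "Cmp C r w = Add C (Cmp C f u) (Cmp C g (Cmp C q2 v))"
    unfolding r_def
    using comp_distrib_right[OF comp_in_hom[OF h(6) f] comp_in_hom[OF h(7) g] w]
      comp_assoc[OF w h(6) f] comp_assoc[OF w h(7) g] p1w p2w by simp
  also have "Cmp C f u = Add C (Cmp C q1 v) (Cmp C (Neg C g) (Cmp C q2 v))"
    using uv comp_distrib_right[OF h(10) comp_in_hom[OF h(11) ng] v] comp_assoc[OF v h(11) ng]
    unfolding \<psi>_def by simp
  also have "Add C (Add C (Cmp C q1 v) (Cmp C (Neg C g) (Cmp C q2 v))) (Cmp C g (Cmp C q2 v))
      = Add C (Cmp C q1 v) (Cmp C (Add C (Neg C g) g) (Cmp C q2 v))"
    using add_assoc[OF qv(1) comp_in_hom[OF qv(2) ng] comp_in_hom[OF qv(2) g]]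
      comp_distrib_right[OF ng g qv(2)] by simp
  also have "\<dots> = Cmp C q1 v"
    using add_neg_left[OF g] comp_zero_left[OF qv(2) c] add_zero_right[OF qv(1)] by simp
  finally have "Cmp C r w = Cmp C q1 v" .
  then have "Cmp C M w = Add C (Cmp C j1 (Cmp C q1 v)) (Cmp C j2 (Cmp C q2 v))"
    unfolding M_def
    using comp_distrib_right[OF comp_in_hom[OF h(1) h(8)] comp_in_hom[OF h(7) h(9)] w]
      comp_assoc[OF w h(1) h(8)] comp_assoc[OF w h(7) h(9)] p2w by simp
  then show "Cmp C M w = v" using biproduct_expand[OF B' v] by simp
qed

lemma biproduct_case_pullback: "is_pullback C f \<psi> p1 M"
  unfolding is_pullback_def
proof (intro conjI allI impI)
  note h = biproduct_case_homs
  show "f \<in> Arr C" "\<psi> \<in> Arr C" "p1 \<in> Arr C" "M \<in> Arr C"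
    "Cod C f = Cod C \<psi>" "Cod C p1 = Dom C f" "Cod C M = Dom C \<psi>" "Dom C p1 = Dom C M"
    using f h hom_iff by auto
  show "Cmp C f p1 = Cmp C \<psi> M" using biproduct_case_square by simp
  fix x u v
  assume "u \<in> hom C x (Dom C f) \<and> v \<in> hom C x (Dom C \<psi>) \<and> Cmp C f u = Cmp C \<psi> v"
  then have u: "u \<in> hom C x a" and v: "v \<in> hom C x S" and uv: "Cmp C f u = Cmp C \<psi> v"
    using f h hom_iff by auto
  show "\<exists>!w. w \<in> hom C x (Dom C p1) \<and> Cmp C p1 w = u \<and> Cmp C M w = v"
  proof (rule ex1I)
    show "Add C (Cmp C i1 u) (Cmp C i2 (Cmp C q2 v)) \<in> hom C x (Dom C p1) \<and>
      Cmp C p1 (Add C (Cmp C i1 u) (Cmp C i2 (Cmp C q2 v))) = u \<and>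
      Cmp C M (Add C (Cmp C i1 u) (Cmp C i2 (Cmp C q2 v))) = v"
      using biproduct_case_lift[OF u v uv] h hom_iff by auto
  next
    fix w assume w: "w \<in> hom C x (Dom C p1) \<and> Cmp C p1 w = u \<and> Cmp C M w = v"
    then have w_hom: "w \<in> hom C x s" using h hom_iff by auto
    have "Cmp C p2 w = Cmp C q2 v"
      using w biproduct_case_factor(2) comp_assoc[OF w_hom h(2) h(11)] by simp
    then show "w = Add C (Cmp C i1 u) (Cmp C i2 (Cmp C q2 v))"
      using biproduct_expand[OF B w_hom] w by simp
  qed
qed

end

end

locale exact_cat =
  fixes C :: "('o,'m,'x) addcat_scheme" and E :: "('m \<times> 'm) set"
  assumes exact: "exact_category C E"

sublocale exact_cat \<subseteq> preadditive_cat
  using exact unfolding exact_category_def additive_def by unfold_locales (elim conjE)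

context exact_cat
begin

lemma adm_seq_kernel_cokernel: "(i, p) \<in> E \<Longrightarrow> is_kernel C i p \<and> is_cokernel C p i"
  using exact unfolding exact_category_def by (elim conjE) blast

lemma adm_seq_iso_closed:
  "(i, p) \<in> E \<Longrightarrow> is_kernel C i' p' \<Longrightarrow> is_cokernel C p' i' \<Longrightarrow>
   iso C \<alpha> \<Longrightarrow> iso C \<beta> \<Longrightarrow> iso C \<gamma> \<Longrightarrow>
   \<alpha> \<in> hom C (Dom C i) (Dom C i') \<Longrightarrow> \<beta> \<in> hom C (Cod C i) (Cod C i') \<Longrightarrow>
   \<gamma> \<in> hom C (Cod C p) (Cod C p') \<Longrightarrow>
   Cmp C \<beta> i = Cmp C i' \<alpha> \<Longrightarrow> Cmp C \<gamma> p = Cmp C p' \<beta> \<Longrightarrow> (i', p') \<in> E"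
  using exact unfolding exact_category_def by (elim conjE) blast

lemma id_adm_mono: "a \<in> Obj C \<Longrightarrow> adm_mono C E (Idt C a)"
  using exact unfolding exact_category_def by (elim conjE) blast

lemma id_adm_epi: "a \<in> Obj C \<Longrightarrow> adm_epi C E (Idt C a)"
  using exact unfolding exact_category_def by (elim conjE) blast

lemma comp_adm_epi:
  "p \<in> hom C a b \<Longrightarrow> q \<in> hom C b c \<Longrightarrow> adm_epi C E p \<Longrightarrow> adm_epi C E q \<Longrightarrow>
   adm_epi C E (Cmp C q p)"
  using exact unfolding exact_category_def by (elim conjE) blast

lemma adm_epi_pullback_exists:
  "adm_epi C E p \<Longrightarrow> f \<in> Arr C \<Longrightarrow> Cod C f = Cod C p \<Longrightarrow>
   \<exists>f' p'. is_pullback C p f f' p' \<and> adm_epi C E p'"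
  using exact unfolding exact_category_def by (elim conjE) iprover

lemma biproduct_exists:
  "a \<in> Obj C \<Longrightarrow> b \<in> Obj C \<Longrightarrow> \<exists>s i1 i2 p1 p2. is_biproduct C a b s i1 i2 p1 p2"
  using exact unfolding exact_category_def additive_def by (elim conjE) blast

text \<open>The admissible sequence \<open>(i, 1\<^sub>c)\<close> given by the axioms, where necessarily \<open>i = 0\<close>,
  is carried to \<open>(\<theta>\<inverse> \<circ> i, \<theta>)\<close> by the isomorphisms \<open>(1, \<theta>\<inverse>, 1)\<close>.\<close>

lemma iso_adm_epi:
  assumes th: "\<theta> \<in> hom C d c" and th': "\<theta>' \<in> hom C c d"
    and inv: "Cmp C \<theta>' \<theta> = Idt C d" "Cmp C \<theta> \<theta>' = Idt C c"
  shows "adm_epi C E \<theta>"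
proof -
  have c: "c \<in> Obj C" using hom_objs th by blast
  obtain i where iE: "(i, Idt C c) \<in> E" using id_adm_epi[OF c] unfolding adm_epi_def by blast
  then have K: "is_kernel C i (Idt C c)" using adm_seq_kernel_cokernel by blast
  then obtain a b c' where i: "i \<in> hom C a b" and id: "Idt C c \<in> hom C b c'"
    unfolding is_kernel_def by blast
  have "b = c" using id id_in_hom[OF c] hom_iff by auto
  then have i: "i \<in> hom C a c" using i by simp
  have a: "a \<in> Obj C" using hom_objs i by blast
  have i': "Cmp C \<theta>' i \<in> hom C a d" using i th' by blast
  have ker: "is_kernel C (Cmp C \<theta>' i) \<theta>" using kernel_of_id_along_iso[OF K th th' inv] .
  then obtain a' c'' where "Cmp C \<theta>' i \<in> hom C a' d" "\<theta> \<in> hom C d c''"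
    and "Cmp C \<theta> (Cmp C \<theta>' i) = Zer C a' c''"
    using th hom_iff unfolding is_kernel_def by auto
  then have "Cmp C \<theta> (Cmp C \<theta>' i) = Zer C a c" using i' th hom_iff by auto
  then have coker: "is_cokernel C \<theta> (Cmp C \<theta>' i)" by (rule iso_is_cokernel[OF th th' inv i'])
  have iso': "iso C \<theta>'" unfolding iso_def using th th' inv hom_iff by auto
  have "(Cmp C \<theta>' i, \<theta>) \<in> E"
  proof (rule adm_seq_iso_closed[OF iE ker coker iso_id[OF a] iso' iso_id[OF c]])
    show "Idt C a \<in> hom C (Dom C i) (Dom C (Cmp C \<theta>' i))" using i i' hom_iff id_in_hom[OF a] by auto
    show "\<theta>' \<in> hom C (Cod C i) (Cod C (Cmp C \<theta>' i))" using i i' hom_iff th' by auto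
    show "Idt C c \<in> hom C (Cod C (Idt C c)) (Cod C \<theta>)" using th hom_iff id_in_hom[OF c] by auto
    show "Cmp C \<theta>' i = Cmp C (Cmp C \<theta>' i) (Idt C a)" using comp_id_right[OF i'] by simp
    show "Cmp C (Idt C c) (Idt C c) = Cmp C \<theta> \<theta>'" using inv comp_id_left id_in_hom[OF c] by simp
  qed
  then show ?thesis unfolding adm_epi_def by blast
qed

lemma pullback_adm_epi:
  assumes pe: "adm_epi C E p" and P: "is_pullback C p f f' p'"
  shows "adm_epi C E p'"
proof -
  have "f \<in> Arr C" "Cod C f = Cod C p" using P unfolding is_pullback_def by auto
  then obtain f'' p'' where P': "is_pullback C p f f'' p''" and pe': "adm_epi C E p''"
    using adm_epi_pullback_exists[OF pe] by blast
  obtain \<theta> \<theta>' where th: "\<theta> \<in> hom C (Dom C f') (Dom C f'')"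
    and th': "\<theta>' \<in> hom C (Dom C f'') (Dom C f')"
    and inv: "Cmp C \<theta>' \<theta> = Idt C (Dom C f')" "Cmp C \<theta> \<theta>' = Idt C (Dom C f'')"
    and p': "Cmp C p'' \<theta> = p'"
    using pullback_comparison[OF P P'] .
  have "p'' \<in> hom C (Dom C f'') (Dom C f)" using P' unfolding is_pullback_def hom_def by auto
  then show ?thesis
    using comp_adm_epi[OF th _ iso_adm_epi[OF th th' inv] pe'] p' by simp
qed

text \<open>The cokernel \<open>\<pi> : b \<rightarrow> Q\<close> of the admissible monomorphism \<open>1\<^sub>b\<close> is an admissible
  epimorphism onto a zero object, and the projection \<open>c \<oplus> b \<rightarrow> c\<close> is a pullback of \<open>\<pi>\<close>.\<close>

lemma biproduct_fst_adm_epi: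
  assumes B: "is_biproduct C c b S j1 j2 q1 q2"
  shows "adm_epi C E q1"
proof -
  have b: "b \<in> Obj C" using biproduct_homs[OF B] hom_objs by blast
  obtain \<pi> where iE: "(Idt C b, \<pi>) \<in> E" using id_adm_mono[OF b] unfolding adm_mono_def by blast
  then have pe: "adm_epi C E \<pi>" unfolding adm_epi_def by blast
  have CK: "is_cokernel C \<pi> (Idt C b)" using adm_seq_kernel_cokernel iE by blast
  then obtain Q where pi: "\<pi> \<in> hom C b Q"
    and U: "\<forall>d f. f \<in> hom C b d \<and> Cmp C f (Idt C b) = Zer C b d \<longrightarrow>
      (\<exists>!g. g \<in> hom C Q d \<and> Cmp C g \<pi> = f)"
    and z: "Cmp C \<pi> (Idt C b) = Zer C b Q"
    using id_in_hom[OF b] hom_iff unfolding is_cokernel_def by auto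
  have Q: "Q \<in> Obj C" using hom_objs pi by blast
  have pi_zero: "\<pi> = Zer C b Q" using z comp_id_right pi by simp
  have "Idt C Q = Zer C Q Q"
    using U[rule_format, OF conjI[OF pi z]] comp_id_left[OF pi] comp_zero_left[OF pi Q]
      pi_zero id_in_hom[OF Q] zero_in_hom[OF Q Q] by metis
  then have "\<And>x w. w \<in> hom C x Q \<Longrightarrow> w = Zer C x Q"
    using comp_id_left comp_zero_left Q by metis
  then show ?thesis
    using pullback_adm_epi[OF pe biproduct_pullback_over_zero[OF B pi]] by blast
qed

lemma biproduct_case_adm_epi:
  assumes B: "is_biproduct C a b s i1 i2 p1 p2"
    and f: "f \<in> hom C a c" and fe: "adm_epi C E f" and g: "g \<in> hom C b c"
  shows "adm_epi C E (Add C (Cmp C f p1) (Cmp C g p2))"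
proof -
  obtain S j1 j2 q1 q2 where B': "is_biproduct C c b S j1 j2 q1 q2"
    using biproduct_exists hom_objs[OF g] by meson
  note homs = biproduct_case_homs[OF B B' f g]
  note factor = biproduct_case_factor(1)[OF B B' f g]
  have "adm_epi C E (Add C (Cmp C j1 (Add C (Cmp C f p1) (Cmp C g p2))) (Cmp C j2 p2))"
    by (rule pullback_adm_epi[OF fe biproduct_case_pullback[OF B B' f g]])
  then have "adm_epi C E (Cmp C q1 (Add C (Cmp C j1 (Add C (Cmp C f p1) (Cmp C g p2))) (Cmp C j2 p2)))"
    by (rule comp_adm_epi[OF homs(2) homs(10) _ biproduct_fst_adm_epi[OF B']])
  then show ?thesis unfolding factor .
qed

lemma biproduct_case_adm_epi':
  assumes B: "is_biproduct C a b s i1 i2 p1 p2"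
    and f: "f \<in> hom C a c" and g: "g \<in> hom C b c" and ge: "adm_epi C E g"
  shows "adm_epi C E (Add C (Cmp C f p1) (Cmp C g p2))"
proof -
  have "p1 \<in> hom C s a" "p2 \<in> hom C s b" using biproduct_homs[OF B] by auto
  then have "Add C (Cmp C f p1) (Cmp C g p2) = Add C (Cmp C g p2) (Cmp C f p1)"
    using add_commute f g by blast
  then show ?thesis using biproduct_case_adm_epi[OF biproduct_swap[OF B] g ge f] by simp
qed

end

locale exact_func = F: exact_cat F EF + G: exact_cat G EG
  for F :: "('o,'m,'x) addcat_scheme" and EF :: "('m \<times> 'm) set"
    and G :: "('p,'n,'y) addcat_scheme" and EG :: "('n \<times> 'n) set"
    and fo :: "'o \<Rightarrow> 'p" and fm :: "'m \<Rightarrow> 'n" +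
  assumes exact_functor: "exact_functor F EF G EG fo fm"
begin

lemma fm_hom: "f \<in> hom F a b \<Longrightarrow> fm f \<in> hom G (fo a) (fo b)"
  using exact_functor unfolding exact_functor_def additive_functor_def is_functor_def by blast

lemma fm_comp: "f \<in> hom F a b \<Longrightarrow> g \<in> hom F b c \<Longrightarrow> fm (Cmp F g f) = Cmp G (fm g) (fm f)"
  using exact_functor unfolding exact_functor_def additive_functor_def is_functor_def by blast

lemma fm_id: "a \<in> Obj F \<Longrightarrow> fm (Idt F a) = Idt G (fo a)"
  using exact_functor unfolding exact_functor_def additive_functor_def is_functor_def by blast

lemma fm_add: "f \<in> hom F a b \<Longrightarrow> g \<in> hom F a b \<Longrightarrow> fm (Add F f g) = Add G (fm f) (fm g)"
  using exact_functor unfolding exact_functor_def additive_functor_def by blast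

lemma fm_adm_epi: "adm_epi F EF p \<Longrightarrow> adm_epi G EG (fm p)"
  using exact_functor unfolding exact_functor_def adm_epi_def by blast

lemma fm_zero:
  assumes "a \<in> Obj F" "b \<in> Obj F"
  shows "fm (Zer F a b) = Zer G (fo a) (fo b)"
proof -
  have z: "Zer F a b \<in> hom F a b" using assms by blast
  have "Add G (fm (Zer F a b)) (fm (Zer F a b)) = fm (Zer F a b)"
    using fm_add[OF z z] F.add_zero_right[OF z] by simp
  then show ?thesis using G.add_self_eq_zero fm_hom[OF z] by blast
qed

lemma fm_biproduct:
  assumes B: "is_biproduct F a b s i1 i2 p1 p2"
  shows "is_biproduct G (fo a) (fo b) (fo s) (fm i1) (fm i2) (fm p1) (fm p2)"
proof -
  have h: "i1 \<in> hom F a s" "i2 \<in> hom F b s" "p1 \<in> hom F s a" "p2 \<in> hom F s b"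
    using F.biproduct_homs[OF B] by auto
  have o: "a \<in> Obj F" "b \<in> Obj F" "s \<in> Obj F" using F.hom_objs h by auto
  have e: "Cmp F p1 i1 = Idt F a" "Cmp F p2 i2 = Idt F b"
    "Cmp F p1 i2 = Zer F b a" "Cmp F p2 i1 = Zer F a b"
    "Add F (Cmp F i1 p1) (Cmp F i2 p2) = Idt F s"
    using B unfolding is_biproduct_def by auto
  have "fm (Add F (Cmp F i1 p1) (Cmp F i2 p2)) = Add G (fm (Cmp F i1 p1)) (fm (Cmp F i2 p2))"
    using fm_add F.comp_in_hom h by blast
  then show ?thesis unfolding is_biproduct_def
    using fm_hom[OF h(1)] fm_hom[OF h(2)] fm_hom[OF h(3)] fm_hom[OF h(4)] e
      fm_comp[OF h(1) h(3)] fm_comp[OF h(2) h(4)] fm_comp[OF h(2) h(3)] fm_comp[OF h(1) h(4)]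
      fm_comp[OF h(3) h(1)] fm_comp[OF h(4) h(2)] fm_id o fm_zero o by simp
qed

lemma lift_through_adm_epi:
  assumes star: "cond_star' F EF G EG fo fm" and ii: "cond_ii' F EF G EG fo fm"
    and X: "X \<in> Obj F" and t: "t \<in> hom G T (fo X)"
  obtains U h \<sigma> where "h \<in> hom F U X" "\<sigma> \<in> hom G (fo U) T" "adm_epi G EG \<sigma>"
    "Cmp G t \<sigma> = fm h"
proof -
  have "T \<in> Obj G" using G.hom_objs t by blast
  then obtain V e where V: "V \<in> Obj F" and e: "e \<in> hom G (fo V) T" and ee: "adm_epi G EG e"
    using star unfolding cond_star'_def by blast
  have "Cmp G t e \<in> hom G (fo V) (fo X)" using e t by blast
  then obtain U p h where p: "p \<in> hom F U V" and pe: "adm_epi F EF p" and h: "h \<in> hom F U X"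
    and eq: "Cmp G (Cmp G t e) (fm p) = fm h"
    using ii V X unfolding cond_ii'_def by blast
  have fp: "fm p \<in> hom G (fo U) (fo V)" using fm_hom[OF p] .
  show ?thesis
  proof (rule that[OF h])
    show "Cmp G e (fm p) \<in> hom G (fo U) T" using fp e by blast
    show "adm_epi G EG (Cmp G e (fm p))" using G.comp_adm_epi[OF fp e fm_adm_epi[OF pe] ee] .
    show "Cmp G t (Cmp G e (fm p)) = fm h" using eq G.comp_assoc[OF fp e t] by simp
  qed
qed

lemma adm_epi_lift_with_adm_epi:
  assumes star: "cond_star' F EF G EG fo fm" and i: "cond_i' F EF G EG fo fm"
    and ii: "cond_ii' F EF G EG fo fm"
    and X: "X \<in> Obj F" and t: "t \<in> hom G T (fo X)" and te: "adm_epi G EG t"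
  shows "\<exists>Z z s. z \<in> hom F Z X \<and> adm_epi F EF z \<and> s \<in> hom G (fo Z) T \<and>
    adm_epi G EG s \<and> Cmp G t s = fm z"
proof -
  obtain Z0 z0 s0 where z0: "z0 \<in> hom F Z0 X" and z0e: "adm_epi F EF z0"
    and s0: "s0 \<in> hom G (fo Z0) T" and eq0: "Cmp G t s0 = fm z0"
    using i X t te unfolding cond_i'_def by blast
  obtain U h \<sigma> where h: "h \<in> hom F U X" and \<sigma>: "\<sigma> \<in> hom G (fo U) T"
    and \<sigma>e: "adm_epi G EG \<sigma>" and eq1: "Cmp G t \<sigma> = fm h"
    using lift_through_adm_epi[OF star ii X t] .
  have "Z0 \<in> Obj F" "U \<in> Obj F" using F.hom_objs z0 h by auto
  then obtain Z i1 i2 p1 p2 where B: "is_biproduct F Z0 U Z i1 i2 p1 p2"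
    using F.biproduct_exists by blast
  have p: "p1 \<in> hom F Z Z0" "p2 \<in> hom F Z U" using F.biproduct_homs[OF B] by auto
  have fp: "fm p1 \<in> hom G (fo Z) (fo Z0)" "fm p2 \<in> hom G (fo Z) (fo U)" using fm_hom p by auto
  define z where "z = Add F (Cmp F z0 p1) (Cmp F h p2)"
  define s where "s = Add G (Cmp G s0 (fm p1)) (Cmp G \<sigma> (fm p2))"
  have "Cmp G t s = Add G (Cmp G (Cmp G t s0) (fm p1)) (Cmp G (Cmp G t \<sigma>) (fm p2))"
    unfolding s_def using G.comp_distrib_left[OF G.comp_in_hom[OF fp(1) s0] G.comp_in_hom[OF fp(2) \<sigma>] t]
      G.comp_assoc[OF fp(1) s0 t] G.comp_assoc[OF fp(2) \<sigma> t] by simp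
  also have "\<dots> = fm z"
    unfolding z_def eq0 eq1 using fm_add[OF F.comp_in_hom[OF p(1) z0] F.comp_in_hom[OF p(2) h]]
      fm_comp[OF p(1) z0] fm_comp[OF p(2) h] by simp
  finally have "Cmp G t s = fm z" .
  moreover have "z \<in> hom F Z X" unfolding z_def using p z0 h by blast
  moreover have "adm_epi F EF z" unfolding z_def using F.biproduct_case_adm_epi[OF B z0 z0e h] .
  moreover have "s \<in> hom G (fo Z) T" unfolding s_def using fp s0 \<sigma> by blast
  moreover have "adm_epi G EG s"
    unfolding s_def using G.biproduct_case_adm_epi'[OF fm_biproduct[OF B] s0 \<sigma> \<sigma>e] .
  ultimately show ?thesis by blast
qed

lemma cond_i'_if_reflects_adm_epi:
  assumes refl: "reflects_adm_epi F EF G EG fo fm" and star: "cond_star' F EF G EG fo fm"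
    and ii: "cond_ii' F EF G EG fo fm"
  shows "cond_i' F EF G EG fo fm"
  unfolding cond_i'_def
proof (intro ballI allI impI)
  fix X T t assume X: "X \<in> Obj F" and "t \<in> hom G T (fo X) \<and> adm_epi G EG t"
  then have t: "t \<in> hom G T (fo X)" and te: "adm_epi G EG t" by auto
  obtain U h \<sigma> where h: "h \<in> hom F U X" and \<sigma>: "\<sigma> \<in> hom G (fo U) T"
    and \<sigma>e: "adm_epi G EG \<sigma>" and eq: "Cmp G t \<sigma> = fm h"
    using lift_through_adm_epi[OF star ii X t] .
  have "adm_epi G EG (fm h)" using G.comp_adm_epi[OF \<sigma> t \<sigma>e te] eq by simp
  then have "adm_epi F EF h" using refl h F.hom_iff unfolding reflects_adm_epi_def by blast
  then show "\<exists>Z z s. z \<in> hom F Z X \<and> adm_epi F EF z \<and> s \<in> hom G (fo Z) T \<and> Cmp G t s = fm z"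
    using h \<sigma> eq by blast
qed

end

theorem lemma0p1:
  fixes F :: "('o,'m,'x) addcat_scheme" and G :: "('p,'n,'y) addcat_scheme"
    and EF :: "('m \<times> 'm) set" and EG :: "('n \<times> 'n) set"
    and fo :: "'o \<Rightarrow> 'p" and fm :: "'m \<Rightarrow> 'n"
  assumes "exact_category F EF" and "exact_category G EG"
    and "exact_functor F EF G EG fo fm"
  shows "(cond_star' F EF G EG fo fm \<and> cond_i' F EF G EG fo fm \<and> cond_ii' F EF G EG fo fm \<longrightarrow>
           (\<forall>X \<in> Obj F. \<forall>T t. t \<in> hom G T (fo X) \<and> adm_epi G EG t \<longrightarrow>
              (\<exists>Z z s. z \<in> hom F Z X \<and> adm_epi F EF z \<and> s \<in> hom G (fo Z) T \<and>
                       adm_epi G EG s \<and> Cmp G t s = fm z)))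
       \<and> (reflects_adm_epi F EF G EG fo fm \<and> cond_star' F EF G EG fo fm \<and>
            cond_ii' F EF G EG fo fm \<longrightarrow> cond_i' F EF G EG fo fm)"
proof -
  interpret exact_func F EF G EG fo fm
    using assms by (simp add: exact_func_def exact_func_axioms_def exact_cat_def)
  show ?thesis
    using adm_epi_lift_with_adm_epi cond_i'_if_reflects_adm_epi by blast
qed

end
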